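(* Assume the drift assumption and the perturbation assumption below, and let $f,c_0,\varphi_0$ be as constructed below. Given $\delta>0$, let $\lambda:\mathbb R^d\to\mathbb R$ be a smooth function with $|\lambda(z)|\le1$ for all $z$ and $\lambda(z)=1$ for $|z|\ge\delta$. If $L<\frac{c_0\varphi_0\sigma^2}{8}$, then with $c:=c_0\sigma^2/2$, for all $X,Y\in\mathbb R^{Nd}$, writing $Z=X-Y$ and $r^i=|Z^i|$, $$\sum_{i=1}^N\Big((r^i)^{-1}Z^i\cdot(b^i(X)-b^i(Y))f'(r^i)+2\sigma^2\lambda^2(Z^i)f''(r^i)\Big)\le N m(\delta)-c\sum_{i=1}^Nf(r^i),$$ where $m(\delta)=\frac{\sigma^2}{2}\sup_{0<r<\delta}\big(r\kappa(r)^-\big)+c_0\sigma^2\delta$ and $x^-=-\min\{x,0\}$.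
   Context: Let $N\ge1$, $d\ge1$, $\sigma>0$, $b:\mathbb R^d\to\mathbb R^d$, $\gamma^i:\mathbb R^{Nd}\to\mathbb R^d$ ($i=1,\dots,N$), and $b^i(x)=b(x^i)+\gamma^i(x)$ for $x=(x^1,\dots,x^N)\in\mathbb R^{Nd}$. When $Z^i=0$, the term $(r^i)^{-1}Z^i\cdot(b^i(X)-b^i(Y))f'(r^i)$ is taken to be $0$. Drift assumption: there is $\kappa:(0,\infty)\to\mathbb R$ with $\kappa(r)\le\inf\{-\frac{2}{\sigma^2}\frac{(x-y)\cdot(b(x)-b(y))}{|x-y|^2}: |x-y|=r\}$, continuous on $(0,\infty)$, bounded below on $(0,\infty)$, with $\liminf_{r\to\infty}\kappa(r)>0$. Perturbation assumption: $\sum_{i=1}^N|\gamma^i(x)-\gamma^i(y)|\le L\sum_{i=1}^N|x^i-y^i|$ for all $x,y$. Construction of $f,c_0,\varphi_0$: $\kappa(r)^-=\max\{-\kappa(r),0\}$; $R_0=\inf\{R\ge0:\kappa(r)\ge0\ \forall r\ge R\}$; $R_1=\inf\{R\ge R_0:\kappa(r)R(R-R_0)\ge16\ \forall r\ge R\}$; $\varphi(r)=\exp(-\frac14\int_0^r s\kappa(s)^-ds)$; $\Phi(r)=\int_0^r\varphi$; $I=\int_0^{R_1}\frac{\Phi(s)}{\varphi(s)}ds$; $c_0=1/I$; $\varphi_0=\exp(-\frac14\int_0^{R_0}s\kappa(s)^-ds)$; $\eta=\frac{\Phi(R_1)}{2\varphi(R_1)I}$; $g(r)=1-\frac1{2I}\int_0^r\frac{\Phi(s)}{\varphi(s)}ds$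 for $r\le R_1$, $g(r)=\frac12-\frac{\eta(r-R_1)}{1+4\eta(r-R_1)}$ for $r>R_1$; $f(r)=\int_0^r\varphi(s)g(s)\,ds$. *)

theory Defs
  imports "HOL-Analysis.Analysis"
begin

definition negpart :: "real \<Rightarrow> real" where
  "negpart x = - min x 0"

fun Ck :: "nat \<Rightarrow> ('a::euclidean_space \<Rightarrow> real) \<Rightarrow> bool" where
  "Ck 0 h = continuous_on UNIV h"
| "Ck (Suc k) h = (continuous_on UNIV h \<and>
     (\<forall>u\<in>Basis. \<exists>h'. (\<forall>x. ((\<lambda>t. h (x + t *\<^sub>R u)) has_real_derivative h' x) (at 0)) \<and> Ck k h'))"

definition smooth :: "('a::euclidean_space \<Rightarrow> real) \<Rightarrow> bool" where
  "smooth h = (\<forall>k. Ck k h)"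

text \<open>The construction of f, c_0, phi_0 from kappa (kappa only matters on (0,oo)).\<close>
definition R0 :: "(real \<Rightarrow> real) \<Rightarrow> real" where
  "R0 \<kappa> = Inf {R. R \<ge> 0 \<and> (\<forall>r. r > 0 \<and> r \<ge> R \<longrightarrow> \<kappa> r \<ge> 0)}"

definition R1 :: "(real \<Rightarrow> real) \<Rightarrow> real" where
  "R1 \<kappa> = Inf {R. R \<ge> R0 \<kappa> \<and> (\<forall>r. r > 0 \<and> r \<ge> R \<longrightarrow> \<kappa> r * R * (R - R0 \<kappa>) \<ge> 16)}"

definition phi :: "(real \<Rightarrow> real) \<Rightarrow> real \<Rightarrow> real" where
  "phi \<kappa> r = exp (- (1/4) * integral {0..r} (\<lambda>s. s * negpart (\<kappa> s)))"

definition Phi :: "(real \<Rightarrow> real) \<Rightarrow> real \<Rightarrow> real" where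
  "Phi \<kappa> r = integral {0..r} (phi \<kappa>)"

definition Iconst :: "(real \<Rightarrow> real) \<Rightarrow> real" where
  "Iconst \<kappa> = integral {0..R1 \<kappa>} (\<lambda>s. Phi \<kappa> s / phi \<kappa> s)"

definition c0 :: "(real \<Rightarrow> real) \<Rightarrow> real" where
  "c0 \<kappa> = 1 / Iconst \<kappa>"

definition phi0 :: "(real \<Rightarrow> real) \<Rightarrow> real" where
  "phi0 \<kappa> = exp (- (1/4) * integral {0..R0 \<kappa>} (\<lambda>s. s * negpart (\<kappa> s)))"

definition eta :: "(real \<Rightarrow> real) \<Rightarrow> real" where
  "eta \<kappa> = Phi \<kappa> (R1 \<kappa>) / (2 * phi \<kappa> (R1 \<kappa>) * Iconst \<kappa>)"

definition gfun :: "(real \<Rightarrow> real) \<Rightarrow> real \<Rightarrow> real" where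
  "gfun \<kappa> r = (if r \<le> R1 \<kappa>
      then 1 - (1 / (2 * Iconst \<kappa>)) * integral {0..r} (\<lambda>s. Phi \<kappa> s / phi \<kappa> s)
      else 1/2 - eta \<kappa> * (r - R1 \<kappa>) / (1 + 4 * eta \<kappa> * (r - R1 \<kappa>)))"

definition ffun :: "(real \<Rightarrow> real) \<Rightarrow> real \<Rightarrow> real" where
  "ffun \<kappa> r = integral {0..r} (\<lambda>s. phi \<kappa> s * gfun \<kappa> s)"

text \<open>f' and f'' on [0,oo) (one-sided at 0, ordinary derivatives for r > 0).\<close>
definition fd1 :: "(real \<Rightarrow> real) \<Rightarrow> real \<Rightarrow> real" where
  "fd1 \<kappa> r = vector_derivative (ffun \<kappa>) (at r within {0..})"

definition fd2 :: "(real \<Rightarrow> real) \<Rightarrow> real \<Rightarrow> real" where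
  "fd2 \<kappa> r = vector_derivative (fd1 \<kappa>) (at r within {0..})"

definition mdelta :: "(real \<Rightarrow> real) \<Rightarrow> real \<Rightarrow> real \<Rightarrow> real" where
  "mdelta \<kappa> \<sigma> \<delta> = \<sigma>\<^sup>2 / 2 * Sup ((\<lambda>r. r * negpart (\<kappa> r)) ` {0<..<\<delta>}) + c0 \<kappa> * \<sigma>\<^sup>2 * \<delta>"

end

theory Submission
  imports Defs
begin

text \<open>
  Write \<open>h(s) = s \<kappa>(s)\<^sup>-\<close>, so that \<open>\<phi>' = -h\<phi>/4\<close> and \<open>f'' = -h f'/4 + \<phi> g'\<close>.
  For a single particle at distance \<open>r\<close> the drift assumption bounds the drift part of the
  generator by \<open>-\<sigma>\<^sup>2 r \<kappa>(r) f'(r)/2\<close>, and it remains to bound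
  \<open>-r\<kappa>(r) f'(r)/2 + 2\<lambda>\<^sup>2 f''(r)\<close> by \<open>m(\<delta>)/\<sigma>\<^sup>2 - c\<^sub>0 f(r)\<close>, using \<open>f'' \<le> 0\<close> and \<open>f(r) \<le> \<Phi>(r) \<le> r\<close>.
  For \<open>r < \<delta>\<close> crude bounds suffice: the left side is at most \<open>h(r)/2\<close>, hence at most half the
  supremum of \<open>h\<close> on \<open>(0, \<delta>)\<close>, and \<open>c\<^sub>0 f(r) \<le> c\<^sub>0 \<delta>\<close>.
  For \<open>\<delta> \<le> r \<le> R\<^sub>1\<close>, where \<open>\<lambda> = 1\<close>, the \<open>h\<close>-terms cancel and \<open>g' = -\<Phi>/(2I\<phi>)\<close> leaves exactly
  \<open>-\<Phi>(r)/I \<le> -c\<^sub>0 f(r)\<close>.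
  For \<open>r > R\<^sub>1\<close> the choice of \<open>R\<^sub>1\<close> makes \<open>\<kappa>(r)\<close> so large that the confining term alone
  dominates \<open>c\<^sub>0 f(r)\<close>.
  Finally the perturbations contribute at most \<open>L \<Sum> r\<^sup>i\<close>, which is absorbed by half of
  \<open>c\<^sub>0\<sigma>\<^sup>2 \<Sum> f(r\<^sup>i)\<close> because \<open>f(r) \<ge> \<phi>\<^sub>0 r/4\<close>.
\<close>

lemma negpart_nonneg: "0 \<le> negpart x"
  by (simp add: negpart_def)

lemma neg_le_negpart: "- x \<le> negpart x"
  by (simp add: negpart_def)

lemma integrable_on_of_continuous_on_atLeast:
  fixes u :: "real \<Rightarrow> real"
  assumes "continuous_on {a..} u" "a \<le> b"
  shows "u integrable_on {b..c}"
  using assms by (intro integrable_continuous_interval) (auto intro: continuous_on_subset)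

lemma integral_combine_atLeast:
  fixes u :: "real \<Rightarrow> real"
  assumes "continuous_on {a..} u" "a \<le> b" "b \<le> c"
  shows "integral {a..c} u = integral {a..b} u + integral {b..c} u"
  using Henstock_Kurzweil_Integration.integral_combine[of a b c u]
    integrable_on_of_continuous_on_atLeast[OF assms(1), of a c] assms
  by simp

lemma integral_mono_upper_atLeast:
  fixes u :: "real \<Rightarrow> real"
  assumes "continuous_on {a..} u" "a \<le> b" "b \<le> c" "\<And>x. a \<le> x \<Longrightarrow> 0 \<le> u x"
  shows "integral {a..b} u \<le> integral {a..c} u"
proof -
  have "0 \<le> integral {b..c} u"
    using assms by (intro integral_nonneg integrable_on_of_continuous_on_atLeast) auto
  then show ?thesis
    using integral_combine_atLeast[OF assms(1-3)] by simp
qed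

lemma integral_has_real_derivative_atLeast:
  fixes u :: "real \<Rightarrow> real"
  assumes "continuous_on {a..} u" "a \<le> r"
  shows "((\<lambda>x. integral {a..x} u) has_real_derivative u r) (at r within {a..})"
proof -
  have "((\<lambda>x. integral {a..x} u) has_real_derivative u r) (at r within {a..r+1})"
    using assms by (intro integral_has_real_derivative) (auto intro: continuous_on_subset)
  moreover have "at r within {a..r+1} = at r within {a..}"
    by (rule at_within_nhd[where S = "{..<r+1}"]) auto
  ultimately show ?thesis
    by simp
qed

lemma vector_derivative_at_within_atLeast:
  fixes f :: "real \<Rightarrow> real"
  assumes "a \<le> r" "(f has_real_derivative D) (at r within {a..})"
  shows "vector_derivative f (at r within {a..}) = D"
proof (rule vector_derivative_within)
  have "at r within {a..r+1} = at r within {a..}"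
    by (rule at_within_nhd[where S = "{..<r+1}"]) auto
  moreover have "r islimpt {a..r+1}"
    using assms(1) by simp
  ultimately show "at r within {a..} \<noteq> bot"
    using trivial_limit_within[of r "{a..r+1}"] by simp
  show "(f has_vector_derivative D) (at r within {a..})"
    using assms(2) by (simp add: has_real_derivative_iff_has_vector_derivative)
qed

lemma has_field_derivative_within_Un:
  "(f has_field_derivative D) (at x within S) \<Longrightarrow> (f has_field_derivative D) (at x within T)
    \<Longrightarrow> (f has_field_derivative D) (at x within S \<union> T)"
  by (simp add: has_field_derivative_iff Lim_within_Un)

lemma far_field_inequality:
  fixes R0 R1 r q :: real
  assumes "0 \<le> R0" "R0 < R1" "R1 < r" "R0 \<le> q"
  shows "R1 * (R1 - R0) * (q + (r - R0)) \<le> 2 * r * ((R1 - R0) * q + (R1 - R0)\<^sup>2 / 2)"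
proof -
  have "2 * r * ((R1 - R0) * q + (R1 - R0)\<^sup>2 / 2) - R1 * (R1 - R0) * (q + (r - R0))
      = (R1 - R0) * (q * r + (q - R0) * (r - R1))"
    by (simp add: power2_eq_square field_simps)
  moreover have "0 \<le> (R1 - R0) * (q * r + (q - R0) * (r - R1))"
    using assms by (intro mult_nonneg_nonneg add_nonneg_nonneg) auto
  ultimately show ?thesis
    by linarith
qed

lemma drift_term_bound:
  fixes z w e :: "'a::real_inner" and k p \<sigma> :: real
  assumes "0 < \<sigma>" "0 \<le> p" "p \<le> 1"
    and drift: "z \<noteq> 0 \<Longrightarrow> k \<le> - (2 / \<sigma>\<^sup>2) * inner z w / (norm z)\<^sup>2"
  shows "(if z = 0 then 0 else (1 / norm z) * inner z (w + e) * p)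
         \<le> - (\<sigma>\<^sup>2 / 2) * k * norm z * p + norm e"
proof (cases "z = 0")
  case True
  then show ?thesis by simp
next
  case False
  let ?r = "norm z"
  have r: "0 < ?r"
    using False by simp
  then have "0 < ?r\<^sup>2"
    by simp
  then have "k * ?r\<^sup>2 \<le> - (2 / \<sigma>\<^sup>2) * inner z w"
    using drift[OF False] by (simp only: pos_le_divide_eq)
  then have "inner z w \<le> - (\<sigma>\<^sup>2 / 2) * k * ?r\<^sup>2"
    using assms(1) by (simp add: field_simps)
  moreover have "inner z e \<le> ?r * norm e"
    by (rule norm_cauchy_schwarz)
  ultimately have "(1 / ?r) * inner z (w + e) \<le> - (\<sigma>\<^sup>2 / 2) * k * ?r + norm e"
    using r by (simp add: inner_add_right field_simps power2_eq_square)
  then have "(1 / ?r) * inner z (w + e) * p \<le> (- (\<sigma>\<^sup>2 / 2) * k * ?r + norm e) * p"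
    using assms(2) by (rule mult_right_mono)
  also have "\<dots> \<le> - (\<sigma>\<^sup>2 / 2) * k * ?r * p + norm e"
    using assms(2,3) mult_left_le[of p "norm e"] by (simp add: algebra_simps)
  finally show ?thesis
    using False by simp
qed

locale kappa_profile =
  fixes \<kappa> :: "real \<Rightarrow> real"
  assumes kappa_continuous: "continuous_on {0<..} \<kappa>"
    and kappa_bounded_below: "\<exists>B. \<forall>r>0. \<kappa> r \<ge> B"
    and kappa_Liminf_pos: "Liminf at_top (\<lambda>r. ereal (\<kappa> r)) > 0"
begin

lemma negpart_kappa_bounded:
  obtains M where "0 \<le> M" "\<And>s. 0 < s \<Longrightarrow> negpart (\<kappa> s) \<le> M"
proof -
  obtain B where "\<forall>r>0. B \<le> \<kappa> r"
    using kappa_bounded_below by blast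
  then show ?thesis
    by (intro that[of "max (- B) 0"]) (auto simp: negpart_def)
qed

lemma kappa_eventually_gt:
  obtains z M where "0 < z" "\<And>r. M \<le> r \<Longrightarrow> z < \<kappa> r"
proof -
  obtain z where z: "0 < ereal z" "ereal z < Liminf at_top (\<lambda>r. ereal (\<kappa> r))"
    using ereal_dense2[OF kappa_Liminf_pos] by blast
  have "eventually (\<lambda>r. ereal z < ereal (\<kappa> r)) at_top"
    by (rule less_LiminfD[OF z(2)])
  then obtain M where "\<forall>r\<ge>M. z < \<kappa> r"
    by (auto simp: eventually_at_top_linorder)
  with z(1) that show ?thesis
    by auto
qed

subsection \<open>The radii \<open>R\<^sub>0\<close> and \<open>R\<^sub>1\<close>\<close>

definition R0_candidates :: "real set" where
  "R0_candidates = {R. R \<ge> 0 \<and> (\<forall>r. r > 0 \<and> r \<ge> R \<longrightarrow> \<kappa> r \<ge> 0)}"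

definition R1_candidates :: "real set" where
  "R1_candidates = {R. R \<ge> R0 \<kappa> \<and> (\<forall>r. r > 0 \<and> r \<ge> R \<longrightarrow> \<kappa> r * R * (R - R0 \<kappa>) \<ge> 16)}"

lemma R0_eq_Inf: "R0 \<kappa> = Inf R0_candidates"
  by (simp add: R0_def R0_candidates_def)

lemma R1_eq_Inf: "R1 \<kappa> = Inf R1_candidates"
  by (simp add: R1_def R1_candidates_def)

lemma R0_candidates_nonempty: "R0_candidates \<noteq> {}"
proof -
  obtain z M where z: "0 < z" and M: "\<And>r. M \<le> r \<Longrightarrow> z < \<kappa> r"
    using kappa_eventually_gt by blast
  have "0 \<le> \<kappa> r" if "M \<le> r" for r
    using M[OF that] z by simp
  then have "max M 0 \<in> R0_candidates"
    by (simp add: R0_candidates_def)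
  then show ?thesis
    by blast
qed

lemma R0_nonneg: "0 \<le> R0 \<kappa>"
  unfolding R0_eq_Inf using R0_candidates_nonempty
  by (intro cInf_greatest) (auto simp: R0_candidates_def)

lemma kappa_nonneg_above_R0:
  assumes "R0 \<kappa> < r"
  shows "0 \<le> \<kappa> r"
proof -
  obtain R where "R \<in> R0_candidates" "R < r"
    using cInf_lessD[OF R0_candidates_nonempty, of r] assms by (auto simp: R0_eq_Inf)
  with R0_nonneg assms show ?thesis
    by (auto simp: R0_candidates_def)
qed

lemma R1_candidates_nonempty: "R1_candidates \<noteq> {}"
proof -
  obtain z M where z: "0 < z" and M: "\<And>r. M \<le> r \<Longrightarrow> z < \<kappa> r"
    using kappa_eventually_gt by blast
  define R where "R = R0 \<kappa> + max M 0 + 1 + 16 / z"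
  have "0 < 16 / z"
    using z by simp
  then have R: "1 \<le> R - R0 \<kappa>" "16 / z \<le> R - R0 \<kappa>" "M \<le> R" "1 \<le> R"
    unfolding R_def using R0_nonneg max.cobounded1[of M 0] max.cobounded2[of 0 M] by linarith+
  have "R \<in> R1_candidates"
    unfolding R1_candidates_def
  proof safe
    show "R0 \<kappa> \<le> R"
      using R by simp
    fix r
    assume "0 < r" "R \<le> r"
    then have "z < \<kappa> r"
      using M R by auto
    moreover have "1 * (16 / z) \<le> R * (R - R0 \<kappa>)"
      using R z by (intro mult_mono) auto
    ultimately have "z * (16 / z) \<le> \<kappa> r * (R * (R - R0 \<kappa>))"
      using z by (intro mult_mono) auto
    then show "16 \<le> \<kappa> r * R * (R - R0 \<kappa>)"
      using z by (simp add: mult.assoc)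
  qed
  then show ?thesis
    by blast
qed

lemma R0_less_R1_candidate:
  assumes "R \<in> R1_candidates"
  shows "R0 \<kappa> < R"
proof -
  have "R0 \<kappa> \<le> R" "16 \<le> \<kappa> (R + 1) * R * (R - R0 \<kappa>)"
    using assms R0_nonneg by (auto simp: R1_candidates_def)
  then show ?thesis
    by (cases "R = R0 \<kappa>") auto
qed

lemma R1_candidates_upward_closed:
  assumes "R \<in> R1_candidates" "R \<le> R'"
  shows "R' \<in> R1_candidates"
  unfolding R1_candidates_def
proof safe
  have R: "R0 \<kappa> < R"
    using assms(1) by (rule R0_less_R1_candidate)
  then show "R0 \<kappa> \<le> R'"
    using assms(2) by simp
  fix r
  assume r: "0 < r" "R' \<le> r"
  have "16 \<le> \<kappa> r * (R * (R - R0 \<kappa>))"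
    using assms r by (auto simp: R1_candidates_def mult.assoc)
  also have "\<dots> \<le> \<kappa> r * (R' * (R' - R0 \<kappa>))"
    using R r assms(2) R0_nonneg kappa_nonneg_above_R0[of r]
    by (intro mult_left_mono mult_mono) auto
  finally show "16 \<le> \<kappa> r * R' * (R' - R0 \<kappa>)"
    by (simp add: mult.assoc)
qed

lemma R0_le_R1: "R0 \<kappa> \<le> R1 \<kappa>"
  unfolding R1_eq_Inf using R1_candidates_nonempty
  by (intro cInf_greatest) (auto simp: R1_candidates_def)

text \<open>\<open>R\<^sub>1\<close> itself need not be a candidate, but the defining inequality passes to the limit.\<close>
lemma kappa_above_R1:
  assumes "R1 \<kappa> < r"
  shows "16 \<le> \<kappa> r * R1 \<kappa> * (R1 \<kappa> - R0 \<kappa>)"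
proof -
  have "R \<in> R1_candidates" if R: "R1 \<kappa> < R" for R
  proof -
    obtain R' where "R' \<in> R1_candidates" "R' < R"
      using cInf_lessD[OF R1_candidates_nonempty, of R] R by (auto simp: R1_eq_Inf)
    then show ?thesis
      using R1_candidates_upward_closed by auto
  qed
  then have "\<forall>\<^sub>F R in at_right (R1 \<kappa>). 16 \<le> \<kappa> r * R * (R - R0 \<kappa>)"
    using assms R0_le_R1 R0_nonneg unfolding eventually_at_right_field
    by (intro exI[of _ r]) (auto simp: R1_candidates_def)
  moreover have "((\<lambda>R. \<kappa> r * R * (R - R0 \<kappa>)) \<longlongrightarrow> \<kappa> r * R1 \<kappa> * (R1 \<kappa> - R0 \<kappa>))
      (at_right (R1 \<kappa>))"
    by (intro tendsto_eq_intros) auto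
  ultimately show ?thesis
    by (intro tendsto_lowerbound) auto
qed

lemma R0_less_R1: "R0 \<kappa> < R1 \<kappa>"
  using kappa_above_R1[of "R1 \<kappa> + 1"] R0_le_R1 by (cases "R1 \<kappa> = R0 \<kappa>") auto

subsection \<open>The weight \<open>\<phi>\<close> and its primitive \<open>\<Phi>\<close>\<close>

definition h :: "real \<Rightarrow> real" where
  "h s = s * negpart (\<kappa> s)"

definition H :: "real \<Rightarrow> real" where
  "H r = integral {0..r} h"

lemma h_nonneg: "0 \<le> s \<Longrightarrow> 0 \<le> h s"
  by (simp add: h_def negpart_nonneg)

lemma h_continuous_on: "continuous_on {0..} h"
proof -
  obtain M where M: "0 \<le> M" "\<And>s. 0 < s \<Longrightarrow> negpart (\<kappa> s) \<le> M"
    using negpart_kappa_bounded by blast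
  have "continuous (at x within {0..}) h" if x: "0 \<le> x" for x
  proof (cases "x = 0")
    case True
    have "(h \<longlongrightarrow> 0) (at 0 within {0..})"
    proof (rule tendsto_sandwich[where f = "\<lambda>_. 0" and h = "\<lambda>s. M * s"])
      show "\<forall>\<^sub>F s in at 0 within {0..}. 0 \<le> h s"
        by (auto simp: eventually_at_filter h_nonneg)
      show "\<forall>\<^sub>F s in at 0 within {0..}. h s \<le> M * s"
        unfolding eventually_at_filter
        by (auto intro!: always_eventually simp: h_def M(2) mult.commute mult_left_mono)
    qed (auto intro!: tendsto_eq_intros)
    then show ?thesis
      using True by (simp add: continuous_within h_def)
  next
    case False
    with x have "isCont \<kappa> x"
      using kappa_continuous by (simp add: continuous_on_eq_continuous_at)
    then have "isCont h x"
      unfolding h_def negpart_def by (intro continuous_intros)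
    then show ?thesis
      by (rule continuous_at_imp_continuous_at_within)
  qed
  then show ?thesis
    by (simp add: continuous_on_eq_continuous_within)
qed

lemma h_eq_0_from_R0:
  assumes "R0 \<kappa> \<le> s"
  shows "h s = 0"
proof -
  have "0 \<le> \<kappa> s" if "0 < s"
  proof (cases "R0 \<kappa> < s")
    case True
    then show ?thesis by (rule kappa_nonneg_above_R0)
  next
    case False
    with assms have s: "s = R0 \<kappa>"
      by simp
    have "(\<kappa> \<longlongrightarrow> \<kappa> s) (at_right s)"
      using kappa_continuous that
      by (simp add: continuous_on_eq_continuous_at isCont_def filterlim_at_split)
    moreover have "\<forall>\<^sub>F r in at_right s. 0 \<le> \<kappa> r"
      using kappa_nonneg_above_R0 s by (auto simp: eventually_at_filter)
    ultimately show ?thesis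
      by (intro tendsto_lowerbound) auto
  qed
  then show ?thesis
    using assms R0_nonneg by (cases "s = 0") (auto simp: h_def negpart_def)
qed

lemma H_nonneg: "0 \<le> r \<Longrightarrow> 0 \<le> H r"
  unfolding H_def by (intro integral_nonneg integrable_on_of_continuous_on_atLeast[OF h_continuous_on])
    (auto simp: h_nonneg)

lemma H_eq_H_R0:
  assumes "R0 \<kappa> \<le> r"
  shows "H r = H (R0 \<kappa>)"
proof -
  have "integral {R0 \<kappa>..r} h = integral {R0 \<kappa>..r} (\<lambda>_. 0)"
    by (intro integral_cong) (auto simp: h_eq_0_from_R0)
  then show ?thesis
    using integral_combine_atLeast[OF h_continuous_on R0_nonneg assms] by (simp add: H_def)
qed

lemma H_le_H_R0: "0 \<le> r \<Longrightarrow> H r \<le> H (R0 \<kappa>)"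
  using H_eq_H_R0[of r] unfolding H_def
  by (cases "r \<le> R0 \<kappa>") (auto intro!: integral_mono_upper_atLeast h_continuous_on h_nonneg)

lemma phi_eq: "phi \<kappa> r = exp (- (1/4) * H r)"
  by (simp add: phi_def H_def h_def[abs_def])

lemma phi0_eq: "phi0 \<kappa> = exp (- (1/4) * H (R0 \<kappa>))"
  by (simp add: phi0_def H_def h_def[abs_def])

lemma phi_pos: "0 < phi \<kappa> r"
  by (simp add: phi_eq)

lemma phi0_pos: "0 < phi0 \<kappa>"
  by (simp add: phi0_eq)

lemma phi_le_1: "0 \<le> r \<Longrightarrow> phi \<kappa> r \<le> 1"
  using H_nonneg by (simp add: phi_eq)

lemma phi0_le_phi: "0 \<le> r \<Longrightarrow> phi0 \<kappa> \<le> phi \<kappa> r"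
  using H_le_H_R0 by (simp add: phi_eq phi0_eq)

lemma phi_eq_phi0: "R0 \<kappa> \<le> r \<Longrightarrow> phi \<kappa> r = phi0 \<kappa>"
  using H_eq_H_R0[of r] by (simp add: phi_eq phi0_eq)

lemma phi_has_real_derivative:
  assumes "0 \<le> r"
  shows "(phi \<kappa> has_real_derivative - (1/4) * h r * phi \<kappa> r) (at r within {0..})"
proof -
  have "(H has_real_derivative h r) (at r within {0..})"
    unfolding H_def[abs_def] using h_continuous_on assms by (rule integral_has_real_derivative_atLeast)
  then have "((\<lambda>x. exp (- (1/4) * H x)) has_real_derivative exp (- (1/4) * H r) * (- (1/4) * h r))
      (at r within {0..})"
    by (intro DERIV_chain2[OF DERIV_exp] DERIV_cmult)
  then show ?thesis
    by (simp add: phi_eq[abs_def] mult_ac)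
qed

lemma phi_continuous_on: "continuous_on {0..} (phi \<kappa>)"
  by (rule DERIV_continuous_on[OF phi_has_real_derivative]) auto

lemma Phi_continuous_on: "continuous_on {0..} (Phi \<kappa>)"
  unfolding Phi_def[abs_def]
  by (rule DERIV_continuous_on[OF integral_has_real_derivative_atLeast[OF phi_continuous_on]]) auto

lemma Phi_nonneg: "0 \<le> r \<Longrightarrow> 0 \<le> Phi \<kappa> r"
  unfolding Phi_def
  by (intro integral_nonneg integrable_on_of_continuous_on_atLeast[OF phi_continuous_on])
    (auto intro: less_imp_le[OF phi_pos])

lemma Phi_le:
  assumes "0 \<le> r"
  shows "Phi \<kappa> r \<le> r"
proof -
  have "Phi \<kappa> r \<le> integral {0..r} (\<lambda>_. 1)"
    unfolding Phi_def using assms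
    by (intro integral_le integrable_on_of_continuous_on_atLeast[OF phi_continuous_on])
      (auto simp: phi_le_1)
  then show ?thesis
    using assms by simp
qed

lemma Phi_ge:
  assumes "0 \<le> r"
  shows "r * phi0 \<kappa> \<le> Phi \<kappa> r"
proof -
  have "integral {0..r} (\<lambda>_. phi0 \<kappa>) \<le> Phi \<kappa> r"
    unfolding Phi_def using assms
    by (intro integral_le integrable_on_of_continuous_on_atLeast[OF phi_continuous_on])
      (auto simp: phi0_le_phi)
  then show ?thesis
    using assms by simp
qed

lemma Phi_from_R0:
  assumes "R0 \<kappa> \<le> r"
  shows "Phi \<kappa> r = Phi \<kappa> (R0 \<kappa>) + phi0 \<kappa> * (r - R0 \<kappa>)"
proof -
  have "integral {R0 \<kappa>..r} (phi \<kappa>) = integral {R0 \<kappa>..r} (\<lambda>_. phi0 \<kappa>)"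
    by (intro integral_cong) (auto simp: phi_eq_phi0)
  then show ?thesis
    using integral_combine_atLeast[OF phi_continuous_on R0_nonneg assms] assms
    by (simp add: Phi_def mult.commute)
qed

subsection \<open>The constants \<open>I\<close>, \<open>c\<^sub>0\<close> and \<open>\<eta>\<close>\<close>

definition q :: "real \<Rightarrow> real" where
  "q s = Phi \<kappa> s / phi \<kappa> s"

definition J :: "real \<Rightarrow> real" where
  "J r = integral {0..r} q"

lemma Iconst_eq_J: "Iconst \<kappa> = J (R1 \<kappa>)"
  by (simp add: Iconst_def J_def q_def[abs_def])

lemma q_continuous_on: "continuous_on {0..} q"
  unfolding q_def[abs_def] using phi_pos
  by (intro continuous_on_divide Phi_continuous_on phi_continuous_on) (auto simp: less_imp_neq[symmetric])

lemma q_nonneg: "0 \<le> s \<Longrightarrow> 0 \<le> q s"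
  unfolding q_def using Phi_nonneg phi_pos by (simp add: less_imp_le)

lemma R0_le_q_R0: "R0 \<kappa> \<le> q (R0 \<kappa>)"
  using Phi_ge[OF R0_nonneg] phi0_pos by (simp add: q_def phi_eq_phi0 le_divide_eq)

lemma q_from_R0: "R0 \<kappa> \<le> s \<Longrightarrow> q s = q (R0 \<kappa>) + (s - R0 \<kappa>)"
  using phi0_pos Phi_from_R0[of s] by (simp add: q_def phi_eq_phi0 field_simps)

lemma J_nonneg: "0 \<le> r \<Longrightarrow> 0 \<le> J r"
  unfolding J_def by (intro integral_nonneg integrable_on_of_continuous_on_atLeast[OF q_continuous_on])
    (auto simp: q_nonneg)

lemma J_mono: "0 \<le> a \<Longrightarrow> a \<le> b \<Longrightarrow> J a \<le> J b"
  unfolding J_def by (rule integral_mono_upper_atLeast[OF q_continuous_on]) (auto simp: q_nonneg)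

text \<open>On \<open>[R\<^sub>0, R\<^sub>1]\<close> the integrand \<open>q\<close> is affine with slope 1.\<close>
lemma Iconst_ge:
  "(R1 \<kappa> - R0 \<kappa>) * q (R0 \<kappa>) + (R1 \<kappa> - R0 \<kappa>)\<^sup>2 / 2 \<le> Iconst \<kappa>"
proof -
  let ?F = "\<lambda>s. q (R0 \<kappa>) * s + (s - R0 \<kappa>)\<^sup>2 / 2"
  have "((\<lambda>s. q (R0 \<kappa>) + (s - R0 \<kappa>)) has_integral (?F (R1 \<kappa>) - ?F (R0 \<kappa>))) {R0 \<kappa>..R1 \<kappa>}"
  proof (rule fundamental_theorem_of_calculus)
    show "R0 \<kappa> \<le> R1 \<kappa>"
      by (rule R0_le_R1)
    fix x
    have "(?F has_real_derivative q (R0 \<kappa>) + (x - R0 \<kappa>)) (at x within {R0 \<kappa>..R1 \<kappa>})"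
      by (auto intro!: derivative_eq_intros)
    then show "(?F has_vector_derivative q (R0 \<kappa>) + (x - R0 \<kappa>)) (at x within {R0 \<kappa>..R1 \<kappa>})"
      by (simp add: has_real_derivative_iff_has_vector_derivative)
  qed
  then have "integral {R0 \<kappa>..R1 \<kappa>} (\<lambda>s. q (R0 \<kappa>) + (s - R0 \<kappa>)) = ?F (R1 \<kappa>) - ?F (R0 \<kappa>)"
    by (rule integral_unique)
  moreover have "integral {R0 \<kappa>..R1 \<kappa>} q = integral {R0 \<kappa>..R1 \<kappa>} (\<lambda>s. q (R0 \<kappa>) + (s - R0 \<kappa>))"
    by (intro integral_cong q_from_R0) simp
  moreover have "J (R1 \<kappa>) = J (R0 \<kappa>) + integral {R0 \<kappa>..R1 \<kappa>} q"
    unfolding J_def by (rule integral_combine_atLeast[OF q_continuous_on R0_nonneg R0_le_R1])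
  ultimately show ?thesis
    using J_nonneg[OF R0_nonneg] Iconst_eq_J by (simp add: algebra_simps)
qed

lemma Iconst_pos: "0 < Iconst \<kappa>"
proof -
  have "0 \<le> (R1 \<kappa> - R0 \<kappa>) * q (R0 \<kappa>)"
    using R0_less_R1 q_nonneg[OF R0_nonneg] by simp
  moreover have "0 < (R1 \<kappa> - R0 \<kappa>)\<^sup>2 / 2"
    using R0_less_R1 by simp
  ultimately show ?thesis
    using Iconst_ge by linarith
qed

lemma c0_pos: "0 < c0 \<kappa>"
  using Iconst_pos by (simp add: c0_def)

lemma eta_nonneg: "0 \<le> eta \<kappa>"
  using Phi_nonneg[of "R1 \<kappa>"] R0_le_R1 R0_nonneg phi_pos[of "R1 \<kappa>"] Iconst_pos
  by (simp add: eta_def)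

subsection \<open>The factor \<open>g\<close>\<close>

definition g_inner :: "real \<Rightarrow> real" where
  "g_inner r = 1 - (1 / (2 * Iconst \<kappa>)) * J r"

definition g_outer :: "real \<Rightarrow> real" where
  "g_outer r = 1/2 - eta \<kappa> * (r - R1 \<kappa>) / (1 + 4 * eta \<kappa> * (r - R1 \<kappa>))"

definition gfun' :: "real \<Rightarrow> real" where
  "gfun' r = (if r \<le> R1 \<kappa> then - (1 / (2 * Iconst \<kappa>)) * q r
              else - eta \<kappa> / (1 + 4 * eta \<kappa> * (r - R1 \<kappa>))\<^sup>2)"

lemma gfun_eq: "gfun \<kappa> r = (if r \<le> R1 \<kappa> then g_inner r else g_outer r)"
  by (simp add: gfun_def g_inner_def g_outer_def J_def q_def[abs_def])

lemma g_inner_R1_eq_g_outer_R1: "g_inner (R1 \<kappa>) = g_outer (R1 \<kappa>)"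
  using Iconst_pos by (simp add: g_inner_def g_outer_def Iconst_eq_J)

lemma g_inner_has_real_derivative:
  assumes "0 \<le> r"
  shows "(g_inner has_real_derivative - (1 / (2 * Iconst \<kappa>)) * q r) (at r within {0..})"
proof -
  have "(J has_real_derivative q r) (at r within {0..})"
    unfolding J_def[abs_def] using q_continuous_on assms by (rule integral_has_real_derivative_atLeast)
  then show ?thesis
    unfolding g_inner_def[abs_def] using Iconst_pos by (auto intro!: derivative_eq_intros)
qed

lemma g_outer_has_real_derivative:
  assumes "R1 \<kappa> \<le> r"
  shows "(g_outer has_real_derivative - eta \<kappa> / (1 + 4 * eta \<kappa> * (r - R1 \<kappa>))\<^sup>2) (at r)"
proof -
  let ?s = "\<lambda>x. eta \<kappa> * (x - R1 \<kappa>)"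
  have "0 \<le> ?s r"
    using assms eta_nonneg by simp
  then have d: "1 + 4 * ?s r \<noteq> 0"
    by linarith
  have s: "(?s has_real_derivative eta \<kappa>) (at r)"
    and den: "((\<lambda>x. 1 + 4 * ?s x) has_real_derivative 4 * eta \<kappa>) (at r)"
    by (auto intro!: derivative_eq_intros)
  have "((\<lambda>x. 1/2 - ?s x / (1 + 4 * ?s x)) has_real_derivative
      0 - (eta \<kappa> * (1 + 4 * ?s r) - ?s r * (4 * eta \<kappa>)) / ((1 + 4 * ?s r) * (1 + 4 * ?s r))) (at r)"
    by (intro DERIV_diff DERIV_const DERIV_divide[OF s den d])
  moreover have "eta \<kappa> * (1 + 4 * ?s r) - ?s r * (4 * eta \<kappa>) = eta \<kappa>"
    by (simp add: algebra_simps)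
  ultimately show ?thesis
    by (simp add: g_outer_def[abs_def] power2_eq_square mult.assoc)
qed

text \<open>The two pieces of \<open>g\<close> match to first order at \<open>R\<^sub>1\<close>: this is what \<open>\<eta>\<close> is chosen for.\<close>
lemma gfun_has_real_derivative:
  assumes r: "0 \<le> r"
  shows "(gfun \<kappa> has_real_derivative gfun' r) (at r within {0..})"
proof -
  consider "r < R1 \<kappa>" | "R1 \<kappa> < r" | "r = R1 \<kappa>"
    by linarith
  then show ?thesis
  proof cases
    case 1
    have "(g_inner has_real_derivative gfun' r) (at r within {0..})"
      using g_inner_has_real_derivative[OF r] 1 by (simp add: gfun'_def)
    then show ?thesis
      by (rule has_field_derivative_transform_within[where d = "R1 \<kappa> - r"])
        (use 1 r in \<open>auto simp: gfun_eq dist_real_def\<close>)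
  next
    case 2
    have "(g_outer has_real_derivative gfun' r) (at r within {0..})"
      using g_outer_has_real_derivative[of r] 2
      by (auto simp: gfun'_def intro: has_field_derivative_at_within)
    then show ?thesis
      by (rule has_field_derivative_transform_within[where d = "r - R1 \<kappa>"])
        (use 2 r in \<open>auto simp: gfun_eq dist_real_def\<close>)
  next
    case 3
    have slopes_match: "(1 / (2 * Iconst \<kappa>)) * q (R1 \<kappa>) = eta \<kappa>"
      using Iconst_pos phi_pos[of "R1 \<kappa>"] by (simp add: eta_def q_def field_simps)
    have "(g_inner has_real_derivative gfun' r) (at r within {0..R1 \<kappa>})"
      using g_inner_has_real_derivative[OF r] 3
      by (auto simp: gfun'_def intro: has_field_derivative_subset)
    then have left: "(gfun \<kappa> has_real_derivative gfun' r) (at r within {0..R1 \<kappa>})"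
      by (rule has_field_derivative_transform_within[where d = 1]) (use 3 r in \<open>auto simp: gfun_eq\<close>)
    have "(g_outer has_real_derivative gfun' r) (at r within {R1 \<kappa>..})"
      using g_outer_has_real_derivative[of r] 3 slopes_match
      by (auto simp: gfun'_def intro: has_field_derivative_at_within)
    then have right: "(gfun \<kappa> has_real_derivative gfun' r) (at r within {R1 \<kappa>..})"
      by (rule has_field_derivative_transform_within[where d = 1])
        (use 3 g_inner_R1_eq_g_outer_R1 in \<open>auto simp: gfun_eq\<close>)
    have "{0..R1 \<kappa>} \<union> {R1 \<kappa>..} = {0::real..}"
      using R0_le_R1 R0_nonneg by auto
    then show ?thesis
      using has_field_derivative_within_Un[OF left right] by simp
  qed
qed

lemma gfun_continuous_on: "continuous_on {0..} (gfun \<kappa>)"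
  by (rule DERIV_continuous_on[OF gfun_has_real_derivative]) auto

lemma gfun_bounds:
  assumes "0 \<le> r"
  shows "1/4 \<le> gfun \<kappa> r" "gfun \<kappa> r \<le> 1"
proof -
  have "1/4 \<le> gfun \<kappa> r \<and> gfun \<kappa> r \<le> 1"
  proof (cases "r \<le> R1 \<kappa>")
    case True
    then have "0 \<le> J r" "J r \<le> Iconst \<kappa>"
      using J_nonneg[OF assms] J_mono[OF assms True] Iconst_eq_J by auto
    then show ?thesis
      using True Iconst_pos by (simp add: gfun_eq g_inner_def field_simps)
  next
    case False
    let ?s = "eta \<kappa> * (r - R1 \<kappa>)"
    have "0 \<le> ?s"
      using False eta_nonneg by simp
    then have "0 \<le> ?s / (1 + 4 * ?s)" "?s / (1 + 4 * ?s) \<le> 1/4"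
      by (simp_all add: field_simps)
    then show ?thesis
      using False by (simp add: gfun_eq g_outer_def mult.assoc)
  qed
  then show "1/4 \<le> gfun \<kappa> r" "gfun \<kappa> r \<le> 1"
    by auto
qed

lemma gfun'_nonpos: "0 \<le> r \<Longrightarrow> gfun' r \<le> 0"
  using q_nonneg Iconst_pos eta_nonneg by (simp add: gfun'_def)

subsection \<open>The function \<open>f\<close> and its derivatives\<close>

lemma phi_gfun_continuous_on: "continuous_on {0..} (\<lambda>s. phi \<kappa> s * gfun \<kappa> s)"
  by (intro continuous_on_mult phi_continuous_on gfun_continuous_on)

lemma fd1_eq: "0 \<le> r \<Longrightarrow> fd1 \<kappa> r = phi \<kappa> r * gfun \<kappa> r"
  unfolding fd1_def ffun_def[abs_def]
  by (intro vector_derivative_at_within_atLeast integral_has_real_derivative_atLeast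
      phi_gfun_continuous_on)

lemma fd2_eq:
  assumes r: "0 \<le> r"
  shows "fd2 \<kappa> r = - (1/4) * h r * fd1 \<kappa> r + phi \<kappa> r * gfun' r"
proof -
  have "((\<lambda>x. phi \<kappa> x * gfun \<kappa> x) has_real_derivative
      - (1/4) * h r * fd1 \<kappa> r + phi \<kappa> r * gfun' r) (at r within {0..})"
    using DERIV_mult[OF phi_has_real_derivative[OF r] gfun_has_real_derivative[OF r]] r
    by (simp add: fd1_eq algebra_simps)
  then have "(fd1 \<kappa> has_real_derivative - (1/4) * h r * fd1 \<kappa> r + phi \<kappa> r * gfun' r)
      (at r within {0..})"
    by (rule has_field_derivative_transform_within[where d = 1]) (use r in \<open>auto simp: fd1_eq\<close>)
  then show ?thesis
    unfolding fd2_def using r by (intro vector_derivative_at_within_atLeast)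
qed

lemma fd1_nonneg: "0 \<le> r \<Longrightarrow> 0 \<le> fd1 \<kappa> r"
  using phi_pos[of r] gfun_bounds(1)[of r] by (simp add: fd1_eq)

lemma fd1_le_1: "0 \<le> r \<Longrightarrow> fd1 \<kappa> r \<le> 1"
  using phi_le_1[of r] phi_pos[of r] gfun_bounds[of r] mult_mono[of "phi \<kappa> r" 1 "gfun \<kappa> r" 1]
  by (simp add: fd1_eq)

lemma fd2_nonpos:
  assumes "0 \<le> r"
  shows "fd2 \<kappa> r \<le> 0"
proof -
  have "0 \<le> h r * fd1 \<kappa> r"
    using h_nonneg fd1_nonneg assms by simp
  moreover have "phi \<kappa> r * gfun' r \<le> 0"
    using phi_pos[of r] gfun'_nonpos[OF assms] by (simp add: mult_nonneg_nonpos)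
  ultimately show ?thesis
    using fd2_eq[OF assms] by simp
qed

lemma ffun_le_Phi:
  assumes "0 \<le> r"
  shows "ffun \<kappa> r \<le> Phi \<kappa> r"
  unfolding ffun_def Phi_def using assms
  by (intro integral_le integrable_on_of_continuous_on_atLeast[OF phi_gfun_continuous_on]
      integrable_on_of_continuous_on_atLeast[OF phi_continuous_on])
    (auto intro: mult_left_le[OF gfun_bounds(2)] less_imp_le[OF phi_pos])

lemma ffun_ge:
  assumes "0 \<le> r"
  shows "r * (phi0 \<kappa> / 4) \<le> ffun \<kappa> r"
proof -
  have "phi0 \<kappa> * (1/4) \<le> phi \<kappa> s * gfun \<kappa> s" if "0 \<le> s" for s
    using phi_pos[of s] that by (intro mult_mono phi0_le_phi gfun_bounds(1)) auto
  then have "integral {0..r} (\<lambda>_. phi0 \<kappa> / 4) \<le> ffun \<kappa> r"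
    unfolding ffun_def using assms
    by (intro integral_le integrable_on_of_continuous_on_atLeast[OF phi_gfun_continuous_on]) auto
  then show ?thesis
    using assms by simp
qed

subsection \<open>The one-dimensional generator bound\<close>

definition sup_h :: "real \<Rightarrow> real" where
  "sup_h \<delta> = Sup (h ` {0<..<\<delta>})"

lemma mdelta_eq: "mdelta \<kappa> \<sigma> \<delta> = \<sigma>\<^sup>2 * ((1/2) * sup_h \<delta> + c0 \<kappa> * \<delta>)"
  by (simp add: mdelta_def sup_h_def h_def[abs_def] algebra_simps)

lemma bdd_above_h: "bdd_above (h ` {0<..<\<delta>})"
proof -
  obtain M where M: "0 \<le> M" "\<And>s. 0 < s \<Longrightarrow> negpart (\<kappa> s) \<le> M"
    using negpart_kappa_bounded by blast
  have "h s \<le> \<delta> * M" if "s \<in> {0<..<\<delta>}" for s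
    using that M(2)[of s] negpart_nonneg[of "\<kappa> s"] by (auto simp: h_def intro!: mult_mono)
  then show ?thesis
    by (intro bdd_aboveI2) blast
qed

lemma sup_h_nonneg:
  assumes "0 < \<delta>"
  shows "0 \<le> sup_h \<delta>"
proof -
  have "h (\<delta>/2) \<le> sup_h \<delta>"
    unfolding sup_h_def using assms by (intro cSup_upper bdd_above_h) auto
  moreover have "0 \<le> h (\<delta>/2)"
    using assms by (intro h_nonneg) simp
  ultimately show ?thesis
    by linarith
qed

lemma h_le_sup_h:
  assumes "0 \<le> s" "s < \<delta>"
  shows "h s \<le> sup_h \<delta>"
proof (cases "s = 0")
  case True
  then show ?thesis
    using sup_h_nonneg assms by (simp add: h_def)
next
  case False
  then show ?thesis
    unfolding sup_h_def using assms by (intro cSup_upper bdd_above_h) auto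
qed

lemma kappa_term_le_h_term:
  "0 \<le> r \<Longrightarrow> - (1/2) * \<kappa> r * r * fd1 \<kappa> r \<le> (1/2) * h r * fd1 \<kappa> r"
  using mult_right_mono[OF neg_le_negpart[of "\<kappa> r"], of "r * fd1 \<kappa> r"] fd1_nonneg[of r]
  by (simp add: h_def algebra_simps)

lemma generator_bound_below_delta:
  assumes "0 \<le> r" "r < \<delta>" "0 \<le> l"
  shows "- (1/2) * \<kappa> r * r * fd1 \<kappa> r + 2 * l * fd2 \<kappa> r
         \<le> (1/2) * sup_h \<delta> + c0 \<kappa> * \<delta> - c0 \<kappa> * ffun \<kappa> r"
proof -
  have "h r * fd1 \<kappa> r \<le> sup_h \<delta>"
    using h_nonneg[of r] fd1_le_1[of r] h_le_sup_h[of r \<delta>] mult_left_le[of "fd1 \<kappa> r" "h r"]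
      assms fd1_nonneg[of r] by linarith
  moreover have "2 * l * fd2 \<kappa> r \<le> 0"
    using assms fd2_nonpos[of r] by (simp add: mult_nonneg_nonpos)
  moreover have "c0 \<kappa> * ffun \<kappa> r \<le> c0 \<kappa> * \<delta>"
    using ffun_le_Phi[of r] Phi_le[of r] assms c0_pos by (intro mult_left_mono) auto
  ultimately show ?thesis
    using kappa_term_le_h_term[of r] assms by linarith
qed

text \<open>Here the \<open>h\<close>-terms cancel exactly, and \<open>\<phi> g' = -\<Phi>/(2I)\<close>.\<close>
lemma generator_bound_upto_R1:
  assumes "0 \<le> r" "r \<le> R1 \<kappa>"
  shows "- (1/2) * \<kappa> r * r * fd1 \<kappa> r + 2 * fd2 \<kappa> r \<le> - c0 \<kappa> * ffun \<kappa> r"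
proof -
  have "2 * fd2 \<kappa> r = - (1/2) * h r * fd1 \<kappa> r - c0 \<kappa> * Phi \<kappa> r"
    using assms Iconst_pos phi_pos[of r]
    by (simp add: fd2_eq gfun'_def q_def c0_def field_simps)
  moreover have "c0 \<kappa> * ffun \<kappa> r \<le> c0 \<kappa> * Phi \<kappa> r"
    using ffun_le_Phi assms c0_pos by (intro mult_left_mono) auto
  ultimately show ?thesis
    using kappa_term_le_h_term[of r] assms by linarith
qed

lemma generator_bound_above_R1:
  assumes r: "R1 \<kappa> < r"
  shows "c0 \<kappa> * ffun \<kappa> r \<le> (1/2) * \<kappa> r * r * fd1 \<kappa> r"
proof -
  let ?D = "R1 \<kappa> - R0 \<kappa>"
  have r0: "0 \<le> r" "R0 \<kappa> \<le> r"
    using r R0_le_R1 R0_nonneg by linarith+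
  have kappa: "0 \<le> \<kappa> r"
    using r R0_le_R1 by (intro kappa_nonneg_above_R0) simp
  have "R1 \<kappa> * ?D * q r \<le> 2 * r * (?D * q (R0 \<kappa>) + ?D\<^sup>2 / 2)"
    using far_field_inequality[OF R0_nonneg R0_less_R1 r R0_le_q_R0] q_from_R0[OF r0(2)] by simp
  also have "\<dots> \<le> 2 * r * Iconst \<kappa>"
    using Iconst_ge r0 by (intro mult_left_mono) auto
  finally have far: "R1 \<kappa> * ?D * q r \<le> 2 * r * Iconst \<kappa>" .
  have "16 * q r \<le> \<kappa> r * R1 \<kappa> * ?D * q r"
    using kappa_above_R1[OF r] q_nonneg[OF r0(1)] by (rule mult_right_mono)
  also have "\<dots> \<le> \<kappa> r * (2 * r * Iconst \<kappa>)"
    using mult_left_mono[OF far kappa] by (simp add: mult.assoc)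
  also have "\<dots> \<le> 8 * \<kappa> r * r * gfun \<kappa> r * Iconst \<kappa>"
    using mult_left_mono[OF gfun_bounds(1)[OF r0(1)], of "8 * \<kappa> r * r * Iconst \<kappa>"]
      kappa r0 Iconst_pos by (simp add: algebra_simps)
  finally have "q r \<le> (1/2) * \<kappa> r * r * gfun \<kappa> r * Iconst \<kappa>"
    by linarith
  then have "c0 \<kappa> * Phi \<kappa> r \<le> (1/2) * \<kappa> r * r * fd1 \<kappa> r"
    using phi0_pos Iconst_pos r0
    by (simp add: fd1_eq q_def phi_eq_phi0 c0_def field_simps)
  moreover have "c0 \<kappa> * ffun \<kappa> r \<le> c0 \<kappa> * Phi \<kappa> r"
    using ffun_le_Phi r0 c0_pos by (intro mult_left_mono) auto
  ultimately show ?thesis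
    by linarith
qed

lemma generator_bound:
  assumes "0 < \<delta>" "0 \<le> r" "0 \<le> l" "\<delta> \<le> r \<Longrightarrow> l = 1"
  shows "- (1/2) * \<kappa> r * r * fd1 \<kappa> r + 2 * l * fd2 \<kappa> r
         \<le> (1/2) * sup_h \<delta> + c0 \<kappa> * \<delta> - c0 \<kappa> * ffun \<kappa> r"
proof -
  have slack: "0 \<le> (1/2) * sup_h \<delta> + c0 \<kappa> * \<delta>"
    using sup_h_nonneg c0_pos assms(1) by simp
  consider "r < \<delta>" | "\<delta> \<le> r" "r \<le> R1 \<kappa>" | "R1 \<kappa> < r"
    by linarith
  then show ?thesis
  proof cases
    case 1
    then show ?thesis
      using generator_bound_below_delta assms by blast
  next
    case 2
    then show ?thesis
      using generator_bound_upto_R1[of r] assms slack by simp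
  next
    case 3
    then show ?thesis
      using generator_bound_above_R1[of r] mult_nonneg_nonpos[of "2 * l" "fd2 \<kappa> r"]
        fd2_nonpos[of r] assms slack
      by linarith
  qed
qed

lemma particle_bound:
  fixes x y u v :: "'a::euclidean_space" and b :: "'a \<Rightarrow> 'a"
  assumes "0 < \<sigma>" "0 < \<delta>"
    and drift: "x \<noteq> y \<Longrightarrow>
      \<kappa> (norm (x - y)) \<le> - (2 / \<sigma>\<^sup>2) * (inner (x - y) (b x - b y)) / (norm (x - y))\<^sup>2"
    and "0 \<le> l" "\<delta> \<le> norm (x - y) \<Longrightarrow> l = 1"
  shows "(if x - y = 0 then 0
          else (1 / norm (x - y)) * inner (x - y) ((b x + u) - (b y + v)) * fd1 \<kappa> (norm (x - y)))
         + 2 * \<sigma>\<^sup>2 * l * fd2 \<kappa> (norm (x - y))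
       \<le> mdelta \<kappa> \<sigma> \<delta> - c0 \<kappa> * \<sigma>\<^sup>2 * ffun \<kappa> (norm (x - y)) + norm (u - v)"
proof -
  let ?r = "norm (x - y)"
  have "(b x + u) - (b y + v) = (b x - b y) + (u - v)"
    by (simp add: algebra_simps)
  moreover have "(if x - y = 0 then 0
          else (1 / ?r) * inner (x - y) ((b x - b y) + (u - v)) * fd1 \<kappa> ?r)
      \<le> - (\<sigma>\<^sup>2 / 2) * \<kappa> ?r * ?r * fd1 \<kappa> ?r + norm (u - v)"
    by (rule drift_term_bound[where z = "x - y" and w = "b x - b y" and e = "u - v"])
      (use assms fd1_nonneg fd1_le_1 in auto)
  moreover have "\<sigma>\<^sup>2 * (- (1/2) * \<kappa> ?r * ?r * fd1 \<kappa> ?r + 2 * l * fd2 \<kappa> ?r)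
      \<le> \<sigma>\<^sup>2 * ((1/2) * sup_h \<delta> + c0 \<kappa> * \<delta> - c0 \<kappa> * ffun \<kappa> ?r)"
    using generator_bound[of \<delta> ?r l] assms by (intro mult_left_mono) auto
  ultimately show ?thesis
    unfolding mdelta_eq by (simp only:) (simp add: algebra_simps)
qed

lemma perturbation_absorbed:
  assumes "L < c0 \<kappa> * phi0 \<kappa> * \<sigma>\<^sup>2 / 8" "0 \<le> r"
  shows "L * r \<le> c0 \<kappa> * \<sigma>\<^sup>2 / 2 * ffun \<kappa> r"
proof -
  have "L * r \<le> c0 \<kappa> * phi0 \<kappa> * \<sigma>\<^sup>2 / 8 * r"
    using assms by (intro mult_right_mono) auto
  also have "\<dots> = c0 \<kappa> * \<sigma>\<^sup>2 / 2 * (r * (phi0 \<kappa> / 4))"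
    by simp
  also have "\<dots> \<le> c0 \<kappa> * \<sigma>\<^sup>2 / 2 * ffun \<kappa> r"
    using ffun_ge[OF assms(2)] c0_pos by (intro mult_left_mono) auto
  finally show ?thesis .
qed

end

theorem lemma2:
  fixes N :: nat and \<sigma> L \<delta> :: real
    and b :: "'a::euclidean_space \<Rightarrow> 'a"
    and \<gamma> :: "nat \<Rightarrow> (nat \<Rightarrow> 'a) \<Rightarrow> 'a"
    and \<kappa> :: "real \<Rightarrow> real"
    and lam :: "'a \<Rightarrow> real"
    and X Y :: "nat \<Rightarrow> 'a"
  assumes N: "N \<ge> 1" and sigma: "\<sigma> > 0"
    and kappa_drift: "\<And>x y. x \<noteq> y \<Longrightarrow>
        \<kappa> (norm (x - y)) \<le> - (2 / \<sigma>\<^sup>2) * (inner (x - y) (b x - b y)) / (norm (x - y))\<^sup>2"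
    and kappa_cont: "continuous_on {0<..} \<kappa>"
    and kappa_bdd: "\<exists>B. \<forall>r>0. \<kappa> r \<ge> B"
    and kappa_liminf: "Liminf at_top (\<lambda>r. ereal (\<kappa> r)) > 0"
    and gamma_lip: "\<And>x y. (\<Sum>i<N. norm (\<gamma> i x - \<gamma> i y)) \<le> L * (\<Sum>i<N. norm (x i - y i))"
    and delta: "\<delta> > 0"
    and lam_smooth: "smooth lam"
    and lam_bdd: "\<And>z. \<bar>lam z\<bar> \<le> 1"
    and lam_one: "\<And>z. norm z \<ge> \<delta> \<Longrightarrow> lam z = 1"
    and L_small: "L < c0 \<kappa> * phi0 \<kappa> * \<sigma>\<^sup>2 / 8"
  shows "(\<Sum>i<N.
            (if X i - Y i = 0 then 0
             else (1 / norm (X i - Y i)) *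
                  inner (X i - Y i) ((b (X i) + \<gamma> i X) - (b (Y i) + \<gamma> i Y)) *
                  fd1 \<kappa> (norm (X i - Y i)))
            + 2 * \<sigma>\<^sup>2 * (lam (X i - Y i))\<^sup>2 * fd2 \<kappa> (norm (X i - Y i)))
         \<le> real N * mdelta \<kappa> \<sigma> \<delta> - (c0 \<kappa> * \<sigma>\<^sup>2 / 2) * (\<Sum>i<N. ffun \<kappa> (norm (X i - Y i)))"
proof -
  interpret kappa_profile \<kappa>
    using kappa_cont kappa_bdd kappa_liminf by unfold_locales
  \<comment> \<open>Since \<open>f'' \<le> 0\<close>, only \<open>lam = 1\<close> off the \<open>\<delta>\<close>-ball is used;
    smoothness, \<open>|lam| \<le> 1\<close> and \<open>N \<ge> 1\<close> are not.\<close>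
  let ?r = "\<lambda>i. norm (X i - Y i)"
  let ?G = "\<lambda>i. norm (\<gamma> i X - \<gamma> i Y)"
  let ?c = "c0 \<kappa> * \<sigma>\<^sup>2 / 2"
  have "(\<Sum>i<N. (if X i - Y i = 0 then 0
             else (1 / ?r i) * inner (X i - Y i) ((b (X i) + \<gamma> i X) - (b (Y i) + \<gamma> i Y)) *
                  fd1 \<kappa> (?r i))
            + 2 * \<sigma>\<^sup>2 * (lam (X i - Y i))\<^sup>2 * fd2 \<kappa> (?r i))
      \<le> (\<Sum>i<N. mdelta \<kappa> \<sigma> \<delta> - c0 \<kappa> * \<sigma>\<^sup>2 * ffun \<kappa> (?r i) + ?G i)"
    using lam_one by (intro sum_mono particle_bound sigma delta kappa_drift) auto
  also have "\<dots> = real N * mdelta \<kappa> \<sigma> \<delta> - 2 * ?c * (\<Sum>i<N. ffun \<kappa> (?r i)) + (\<Sum>i<N. ?G i)"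
    by (simp add: sum.distrib sum_subtractf sum_distrib_left)
  also have "(\<Sum>i<N. ?G i) \<le> (\<Sum>i<N. L * ?r i)"
    using gamma_lip[of X Y] by (simp add: sum_distrib_left)
  also have "\<dots> \<le> ?c * (\<Sum>i<N. ffun \<kappa> (?r i))"
    unfolding sum_distrib_left by (intro sum_mono perturbation_absorbed L_small) simp
  finally show ?thesis
    by simp
qed

end
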